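(* Assume the setting in the context. Then the iterates of A-SubSGDP satisfy, for all $t$, $$\mathbb{E}\big[\|w^t-w_*\|^2\big]\le\frac{4\eta^2M}{\mu^2(t+\eta)} .$$
   Context: Setting: $\mathcal Y$ finite; $\mathcal W\subseteq\mathbb{R}^D$ convex; $f_i:\mathcal Y\times\mathbb{R}^D\to\mathbb{R}$ ($i=1,\dots,n$) each convex in $w$, $r$ strongly convex, and each $g_i(w)=r(w)+\max_{y\in\mathcal Y}f_i(y,w)$ is $\mu$-strongly convex; subgradients of $r(w)+f_i(y,w)$ exist and $\sup\{\|v\|^2: v\in\partial[r(w)+f_i(y,w)],\ i,\ y\in\mathcal Y,\ w\in\mathcal W\}\le M$; there is $w_0\in\mathcal W$ with $g_i(w_0)=0$ for all $i$; each $f_i$ has a quantum oracle acting on $O(\mathrm{polylog}(1/\delta,|\mathcal Y|))$ qubits computing $f_i$ with additive error $\delta$. $f=\frac1n\sum_i g_i$ and $w_*=\arg\min_{w\in\mathcal W}f(w)$. Given $\eta\in\mathbb{N}^+$, set $\gamma_t=\frac{\eta}{\mu(t+\eta)}$ and $p_t=\frac1{4\sqrt{t+\eta}}$. A-SubSGDP: given $w^0\in\mathcal W$, an iteration count $T$ and $\eta$, at iteration $t$ choose an index $i$ uniformly at random from $\{1,\dots,n\}$ and compute an estimate $\hat y_i^t$ of a maximizer $\tilde y_i^t\in\arg\max_{y}f_i(y,w^t)$ that is correct with probability at least $1-p_t$; let $\widehat{\partial g_i(w^t)}$ be a subgradient of $w\mapsto r(w)+f_i(\hat y_i^t,w)$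 at $w^t$; set $w^{t+1}=\Pi_{\mathcal W}(w^t-\gamma_t\widehat{\partial g_i(w^t)})$ ($\Pi_{\mathcal W}$ Euclidean projection) and $\bar w_\eta^{t+1}=\frac{t}{t+\eta+1}\bar w_\eta^t+\frac{\eta+1}{t+\eta+1}w^{t+1}$; output $\bar w_\eta^T$. *)

theory Defs
  imports "HOL-Analysis.Analysis" "HOL-Probability.Probability"
begin

definition subdiff :: "('a::real_inner \<Rightarrow> real) \<Rightarrow> 'a \<Rightarrow> 'a set" where
  "subdiff h w = {v. \<forall>u. h w + inner v (u - w) \<le> h u}"

definition strongly_convex_on :: "'a::real_normed_vector set \<Rightarrow> real \<Rightarrow> ('a \<Rightarrow> real) \<Rightarrow> bool" where
  "strongly_convex_on S mu h \<longleftrightarrow>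
     (\<forall>x\<in>S. \<forall>y\<in>S. \<forall>t::real. 0 \<le> t \<longrightarrow> t \<le> 1 \<longrightarrow>
        h (t *\<^sub>R x + (1 - t) *\<^sub>R y)
          \<le> t * h x + (1 - t) * h y - mu / 2 * t * (1 - t) * (norm (x - y))\<^sup>2)"

definition gfun :: "('a \<Rightarrow> real) \<Rightarrow> (nat \<Rightarrow> 'y::finite \<Rightarrow> 'a \<Rightarrow> real) \<Rightarrow> nat \<Rightarrow> 'a \<Rightarrow> real" where
  "gfun r f i w = r w + Max (range (\<lambda>y. f i y w))"

definition Ffun :: "nat \<Rightarrow> ('a \<Rightarrow> real) \<Rightarrow> (nat \<Rightarrow> 'y::finite \<Rightarrow> 'a \<Rightarrow> real) \<Rightarrow> 'a \<Rightarrow> real" where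
  "Ffun n r f w = (\<Sum>i=1..n. gfun r f i w) / real n"

definition argmaxset :: "(nat \<Rightarrow> 'y \<Rightarrow> 'a \<Rightarrow> real) \<Rightarrow> nat \<Rightarrow> 'a \<Rightarrow> 'y set" where
  "argmaxset f i w = {y. \<forall>y'. f i y' w \<le> f i y w}"

definition step_size :: "nat \<Rightarrow> real \<Rightarrow> nat \<Rightarrow> real" where
  "step_size eta mu t = real eta / (mu * (real t + real eta))"

definition fail_prob :: "nat \<Rightarrow> nat \<Rightarrow> real" where
  "fail_prob eta t = 1 / (4 * sqrt (real t + real eta))"

text \<open>Distribution of the iterate w^t of A-SubSGDP.
  est t i w : distribution of the estimate \<hat>y_i^t given the current iterate w;
  sg t i y w : the chosen subgradient of r + f_i(y,.) at w;
  gam : step size sequence.\<close>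
primrec asubsgdp :: "('a::euclidean_space) set \<Rightarrow> nat \<Rightarrow> (nat \<Rightarrow> nat \<Rightarrow> 'a \<Rightarrow> 'y pmf)
    \<Rightarrow> (nat \<Rightarrow> nat \<Rightarrow> 'y \<Rightarrow> 'a \<Rightarrow> 'a) \<Rightarrow> (nat \<Rightarrow> real) \<Rightarrow> 'a \<Rightarrow> nat \<Rightarrow> 'a pmf" where
  "asubsgdp W n est sg gam w0 0 = return_pmf w0"
| "asubsgdp W n est sg gam w0 (Suc t) =
     bind_pmf (asubsgdp W n est sg gam w0 t) (\<lambda>w.
       bind_pmf (pmf_of_set {1..n}) (\<lambda>i.
         bind_pmf (est t i w) (\<lambda>y.
           return_pmf (closest_point W (w - gam t *\<^sub>R sg t i y w)))))"

end

theory Submission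
  imports Defs
begin

text \<open>
  Write \<open>e\<^sub>t\<close> for the expected squared distance of \<open>w\<^sup>t\<close> to \<open>w\<^sub>*\<close>. Since the projection onto \<open>W\<close> is
  nonexpansive, one step with subgradient \<open>v\<close> gives
  \<open>\<parallel>w\<^sup>t\<^sup>+\<^sup>1 - w\<^sub>*\<parallel>\<^sup>2 \<le> \<parallel>w\<^sup>t - w\<^sub>*\<parallel>\<^sup>2 - 2\<gamma>\<^sub>t \<langle>v, w\<^sup>t - w\<^sub>*\<rangle> + \<gamma>\<^sub>t\<^sup>2 M\<close>.
  If the estimated maximiser is correct, \<open>v\<close> is a subgradient of a minorant of \<open>g\<^sub>i\<close> touching it at
  \<open>w\<^sup>t\<close>, so \<mu>-strong convexity bounds \<open>\<langle>v, w\<^sup>t - w\<^sub>*\<rangle>\<close> below by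
  \<open>g\<^sub>i(w\<^sup>t) - g\<^sub>i(w\<^sub>*) + \<mu>/2 \<parallel>w\<^sup>t - w\<^sub>*\<parallel>\<^sup>2\<close>, whose average over \<open>i\<close> is at least
  \<open>\<mu> \<parallel>w\<^sup>t - w\<^sub>*\<parallel>\<^sup>2\<close> because \<open>w\<^sub>*\<close> minimises \<open>f\<close>; if it fails, which happens with probability at most
  \<open>p\<^sub>t\<close>, Cauchy-Schwarz still gives \<open>\<langle>v, w\<^sup>t - w\<^sub>*\<rangle> \<ge> -\<surd>M \<parallel>w\<^sup>t - w\<^sub>*\<parallel>\<close>. For the chosen
  \<open>\<gamma>\<^sub>t\<close> and \<open>p\<^sub>t\<close> the failure term is absorbed by AM-GM, leaving the recursion
  \<open>e\<^sub>t\<^sub>+\<^sub>1 \<le> (1 - (2\<eta> - 1/4)/(t+\<eta>)) e\<^sub>t + 2\<eta>\<^sup>2M/(\<mu>\<^sup>2(t+\<eta>)\<^sup>2)\<close>, and induction on \<open>t\<close> gives the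
  bound; the base case holds because the same estimates confine \<open>W\<close> to the ball of radius
  \<open>\<surd>M/\<mu>\<close> around \<open>w\<^sub>*\<close>.
\<close>

lemma strongly_convex_on_subset:
  "strongly_convex_on T mu h \<Longrightarrow> S \<subseteq> T \<Longrightarrow> strongly_convex_on S mu h"
  unfolding strongly_convex_on_def by blast

lemma strongly_convex_onD:
  assumes "strongly_convex_on S mu h" "x \<in> S" "y \<in> S" "0 \<le> t" "t \<le> 1"
  shows "h (t *\<^sub>R x + (1 - t) *\<^sub>R y) \<le> t * h x + (1 - t) * h y - mu / 2 * t * (1 - t) * (norm (x - y))\<^sup>2"
  using assms unfolding strongly_convex_on_def by blast

lemma strongly_convex_on_add_affine:
  fixes G :: "'a::real_inner \<Rightarrow> real"
  assumes "strongly_convex_on S mu G"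
  shows "strongly_convex_on S mu (\<lambda>u. G u + inner v u + c)"
  unfolding strongly_convex_on_def
proof (intro ballI allI impI)
  fix x y t assume "x \<in> S" "y \<in> S" "0 \<le> (t::real)" "t \<le> 1"
  then have "G (t *\<^sub>R x + (1 - t) *\<^sub>R y)
      \<le> t * G x + (1 - t) * G y - mu / 2 * t * (1 - t) * (norm (x - y))\<^sup>2"
    using assms by (rule strongly_convex_onD[rotated])
  moreover have "t * (G x + inner v x + c) + (1 - t) * (G y + inner v y + c)
      = t * G x + (1 - t) * G y + inner v (t *\<^sub>R x + (1 - t) *\<^sub>R y) + c"
    by (simp add: inner_add_right algebra_simps)
  ultimately show "G (t *\<^sub>R x + (1 - t) *\<^sub>R y) + inner v (t *\<^sub>R x + (1 - t) *\<^sub>R y) + c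
      \<le> t * (G x + inner v x + c) + (1 - t) * (G y + inner v y + c)
        - mu / 2 * t * (1 - t) * (norm (x - y))\<^sup>2"
    by linarith
qed

lemma strongly_convex_on_average:
  fixes g :: "'i \<Rightarrow> 'a::real_normed_vector \<Rightarrow> real"
  assumes "finite I" "I \<noteq> {}" "\<And>i. i \<in> I \<Longrightarrow> strongly_convex_on S mu (g i)"
  shows "strongly_convex_on S mu (\<lambda>x. (\<Sum>i\<in>I. g i x) / card I)"
  unfolding strongly_convex_on_def
proof (intro ballI allI impI)
  fix x y t assume "x \<in> S" "y \<in> S" "0 \<le> (t::real)" "t \<le> 1"
  define D where "D = mu / 2 * t * (1 - t) * (norm (x - y))\<^sup>2"
  have "(\<Sum>i\<in>I. g i (t *\<^sub>R x + (1 - t) *\<^sub>R y)) \<le> (\<Sum>i\<in>I. t * g i x + (1 - t) * g i y - D)"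
    using assms(3) \<open>x \<in> S\<close> \<open>y \<in> S\<close> \<open>0 \<le> t\<close> \<open>t \<le> 1\<close>
    unfolding D_def by (intro sum_mono strongly_convex_onD)
  also have "\<dots> = t * (\<Sum>i\<in>I. g i x) + (1 - t) * (\<Sum>i\<in>I. g i y) - card I * D"
    by (simp add: sum.distrib sum_subtractf sum_distrib_left)
  finally show "(\<Sum>i\<in>I. g i (t *\<^sub>R x + (1 - t) *\<^sub>R y)) / card I
      \<le> t * ((\<Sum>i\<in>I. g i x) / card I) + (1 - t) * ((\<Sum>i\<in>I. g i y) / card I) - D"
    using assms(1,2) by (simp add: card_gt_0_iff field_simps)
qed

lemma strongly_convex_on_minimizer_gap:
  fixes F :: "'a::real_normed_vector \<Rightarrow> real"
  assumes "convex S" "strongly_convex_on S mu F" "x \<in> S" "z \<in> S" "\<And>u. u \<in> S \<Longrightarrow> F x \<le> F u"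
  shows "mu / 2 * (norm (z - x))\<^sup>2 \<le> F z - F x"
proof -
  define K where "K = mu / 2 * (norm (z - x))\<^sup>2"
  have "(1 - t) * K \<le> F z - F x" if t: "0 < t" "t < 1" for t :: real
  proof -
    have "F x \<le> F (t *\<^sub>R z + (1 - t) *\<^sub>R x)"
      using t assms by (intro assms(5) convexD) auto
    also have "\<dots> \<le> t * F z + (1 - t) * F x - t * ((1 - t) * K)"
      using strongly_convex_onD[OF assms(2,4,3), of t] t unfolding K_def by (simp add: mult_ac)
    finally have "t * ((1 - t) * K) \<le> t * (F z - F x)"
      by (simp add: algebra_simps)
    with t show ?thesis by simp
  qed
  moreover have "((\<lambda>t. (1 - t) * K) \<longlongrightarrow> K) (at_right 0)"
    by (auto intro!: tendsto_eq_intros)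
  ultimately show ?thesis
    unfolding K_def[symmetric]
    by (intro tendsto_upperbound[where F = "at_right 0"]) (auto simp: eventually_at_right_field intro!: exI[of _ 1])
qed

lemma strongly_convex_subgradient_ineq:
  fixes G h :: "'a::real_inner \<Rightarrow> real"
  assumes "strongly_convex_on UNIV mu G" "v \<in> subdiff h w" "\<And>u. h u \<le> G u" "h w = G w"
  shows "G w + inner v (z - w) + mu / 2 * (norm (z - w))\<^sup>2 \<le> G z"
proof -
  define H where "H u = G u + inner (- v) u + inner v w" for u
  have "strongly_convex_on UNIV mu H"
    unfolding H_def by (rule strongly_convex_on_add_affine) (rule assms(1))
  moreover have "H w \<le> H u" for u
  proof -
    have "h w + inner v (u - w) \<le> h u"
      using assms(2) by (simp add: subdiff_def)
    then show ?thesis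
      using assms(3)[of u] assms(4) by (simp add: H_def inner_diff_right)
  qed
  ultimately have "mu / 2 * (norm (z - w))\<^sup>2 \<le> H z - H w"
    by (intro strongly_convex_on_minimizer_gap) auto
  then show ?thesis
    by (simp add: H_def inner_diff_right)
qed

lemma expectation_ge_of_prob_ge:
  fixes X :: "'y \<Rightarrow> real"
  assumes "integrable (measure_pmf \<pi>) X" "measure_pmf.prob \<pi> A \<ge> 1 - p" "0 \<le> p"
    "\<And>y. y \<in> A \<Longrightarrow> c \<le> X y" "\<And>y. - B \<le> X y" "c \<le> B" "0 \<le> B"
  shows "c - 2 * p * B \<le> measure_pmf.expectation \<pi> X"
proof -
  have "integrable (measure_pmf \<pi>) (\<lambda>y. - B + (c + B) * indicator A y)"
    by (intro measure_pmf.integrable_const_bound[where B = "\<bar>B\<bar> + \<bar>c + B\<bar>"])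
      (auto simp: indicator_def)
  then have "measure_pmf.expectation \<pi> (\<lambda>y. - B + (c + B) * indicator A y) \<le> measure_pmf.expectation \<pi> X"
    using assms(1,4,5) by (intro integral_mono) (auto simp: indicator_def)
  moreover have "measure_pmf.expectation \<pi> (\<lambda>y. - B + (c + B) * indicator A y)
      = - B + (c + B) * measure_pmf.prob \<pi> A"
    by (simp add: measure_pmf.integrable_const_bound[where B = 1])
  moreover have "c - 2 * p * B \<le> - B + (c + B) * measure_pmf.prob \<pi> A"
  proof (cases "0 \<le> c + B")
    case True
    with assms(2,6) have "(c + B) * (1 - p) \<le> (c + B) * measure_pmf.prob \<pi> A"
      by (intro mult_left_mono) auto
    moreover have "(c + B) * p \<le> 2 * B * p"
      using assms(3,6) by (intro mult_right_mono) auto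
    ultimately show ?thesis
      by (simp add: algebra_simps)
  next
    case False
    then have "c + B \<le> (c + B) * measure_pmf.prob \<pi> A"
      by (simp add: mult_le_cancel_left1 measure_pmf.prob_le_1)
    moreover have "0 \<le> p * B"
      using assms(3,7) by simp
    ultimately show ?thesis
      by linarith
  qed
  ultimately show ?thesis by linarith
qed

lemma expectation_bind_pmf_le_affine:
  fixes h :: "'a \<Rightarrow> real"
  assumes "finite (set_pmf p)" "\<And>x. x \<in> set_pmf p \<Longrightarrow> finite (set_pmf (k x))"
    "\<And>x. x \<in> set_pmf p \<Longrightarrow> measure_pmf.expectation (k x) h \<le> a * h x + b"
  shows "measure_pmf.expectation (bind_pmf p k) h \<le> a * measure_pmf.expectation p h + b"
proof -
  have "measure_pmf.expectation (bind_pmf p k) h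
      = (\<Sum>x\<in>set_pmf p. pmf p x * measure_pmf.expectation (k x) h)"
    using assms(1,2) by (simp add: pmf_expectation_bind)
  also have "\<dots> \<le> (\<Sum>x\<in>set_pmf p. pmf p x * (a * h x + b))"
    using assms(3) by (intro sum_mono mult_left_mono) auto
  also have "\<dots> = measure_pmf.expectation p (\<lambda>x. a * h x + b)"
    using assms(1) by (simp add: integral_measure_pmf[of "set_pmf p"])
  also have "\<dots> = a * measure_pmf.expectation p h + b"
    using assms(1) by (simp add: integrable_measure_pmf_finite)
  finally show ?thesis .
qed

lemma norm_closest_point_step_le:
  fixes W :: "'a::euclidean_space set"
  assumes "convex W" "closed W" "z \<in> W"
  shows "(norm (closest_point W (w - \<gamma> *\<^sub>R g) - z))\<^sup>2
           \<le> (norm (w - z))\<^sup>2 - 2 * \<gamma> * inner g (w - z) + \<gamma>\<^sup>2 * (norm g)\<^sup>2"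
proof -
  have "dist (closest_point W (w - \<gamma> *\<^sub>R g)) (closest_point W z) \<le> dist (w - \<gamma> *\<^sub>R g) z"
    using assms by (intro closest_point_lipschitz) auto
  then have "norm (closest_point W (w - \<gamma> *\<^sub>R g) - z) \<le> norm ((w - z) - \<gamma> *\<^sub>R g)"
    using closest_point_self[OF assms(3)] by (simp add: dist_norm algebra_simps)
  then have "(norm (closest_point W (w - \<gamma> *\<^sub>R g) - z))\<^sup>2 \<le> (norm ((w - z) - \<gamma> *\<^sub>R g))\<^sup>2"
    by (intro power_mono) auto
  also have "\<dots> = (norm (w - z))\<^sup>2 - 2 * \<gamma> * inner g (w - z) + \<gamma>\<^sup>2 * (norm g)\<^sup>2"
    unfolding power2_norm_eq_inner by (simp add: inner_diff_left inner_diff_right inner_commute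
        power2_eq_square algebra_simps)
  finally show ?thesis .
qed

lemma sgd_step_coefficient_le:
  fixes s mu M b eta :: real
  assumes "0 < s" "0 < mu" "0 \<le> M"
  defines "\<gamma> \<equiv> eta / (mu * s)" and "p \<equiv> 1 / (4 * sqrt s)"
  shows "(1 - 2 * \<gamma> * mu) * b\<^sup>2 + \<gamma>\<^sup>2 * M + 4 * \<gamma> * p * (sqrt M * b)
           \<le> (1 - (2 * eta - 1/4) / s) * b\<^sup>2 + 2 * eta\<^sup>2 * (M / mu\<^sup>2) / s\<^sup>2"
proof -
  define x where "x = b / (2 * sqrt s)"
  define y where "y = eta * sqrt M / (mu * s)"
  have "4 * \<gamma> * p * (sqrt M * b) = 2 * x * y"
    using assms(1,2) by (simp add: \<gamma>_def p_def x_def y_def field_simps)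
  also have "\<dots> \<le> x\<^sup>2 + y\<^sup>2"
    by (rule sum_squares_bound)
  also have "\<dots> = b\<^sup>2 / (4 * s) + eta\<^sup>2 * (M / mu\<^sup>2) / s\<^sup>2"
    using assms by (simp add: x_def y_def power_divide power_mult_distrib)
  finally have "4 * \<gamma> * p * (sqrt M * b) \<le> b\<^sup>2 / (4 * s) + eta\<^sup>2 * (M / mu\<^sup>2) / s\<^sup>2" .
  moreover have "(1 - 2 * \<gamma> * mu) * b\<^sup>2 + \<gamma>\<^sup>2 * M + b\<^sup>2 / (4 * s) + eta\<^sup>2 * (M / mu\<^sup>2) / s\<^sup>2
      = (1 - (2 * eta - 1/4) / s) * b\<^sup>2 + 2 * eta\<^sup>2 * (M / mu\<^sup>2) / s\<^sup>2"
    using assms(1,2) by (simp add: \<gamma>_def field_simps power2_eq_square)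
  ultimately show ?thesis by linarith
qed

lemma sgd_recursion_step_le:
  fixes s eta q e :: real
  assumes "1 \<le> eta" "eta \<le> s" "0 \<le> q" "0 \<le> e" "e \<le> 4 * q / s"
  shows "(1 - (2 * eta - 1/4) / s) * e + 2 * q / s\<^sup>2 \<le> 4 * q / (s + 1)"
proof (cases "0 \<le> 1 - (2 * eta - 1/4) / s")
  case True
  have "(1 - (2 * eta - 1/4) / s) * e \<le> (1 - (2 * eta - 1/4) / s) * (4 * q / s)"
    using assms(5) True by (rule mult_left_mono)
  moreover have "(1 - (2 * eta - 1/4) / s) * (4 * q / s) + 2 * q / s\<^sup>2
      = 4 * q / (s + 1) - q * ((8 * eta - 3) * (s + 1) - 4 * s) / (s\<^sup>2 * (s + 1))"
    using assms(1,2) by (simp add: divide_simps) (simp add: power2_eq_square algebra_simps)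
  moreover have "5 * (s + 1) \<le> (8 * eta - 3) * (s + 1)"
    using assms(1,2) by (intro mult_right_mono) auto
  then have "0 \<le> q * ((8 * eta - 3) * (s + 1) - 4 * s) / (s\<^sup>2 * (s + 1))"
    using assms(1-3) by (intro divide_nonneg_nonneg mult_nonneg_nonneg) auto
  ultimately show ?thesis by linarith
next
  case False
  then have "(1 - (2 * eta - 1/4) / s) * e \<le> 0"
    using assms(4) by (simp add: mult_nonpos_nonneg)
  moreover have "2 * q / s\<^sup>2 \<le> 4 * q / (s + 1)"
  proof -
    have "0 \<le> (s - 1) * (4 * s + 2)"
      using assms(1,2) by (intro mult_nonneg_nonneg) auto
    then have "2 * (s + 1) \<le> 4 * s\<^sup>2"
      by (simp add: algebra_simps power2_eq_square)
    then have "2 / s\<^sup>2 \<le> 4 / (s + 1)"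
      using assms(1,2) by (simp add: field_simps)
    then show ?thesis
      using assms(3) mult_left_mono[of "2 / s\<^sup>2" "4 / (s + 1)" q] by (simp add: ac_simps)
  qed
  ultimately show ?thesis by linarith
qed

lemma sgd_recursion_bound:
  fixes e :: "nat \<Rightarrow> real" and eta m :: real
  assumes "1 \<le> eta" "0 \<le> m" "\<And>t. 0 \<le> e t" "e 0 \<le> 4 * eta * m"
    and step: "\<And>t. e (Suc t) \<le> (1 - (2 * eta - 1/4) / (t + eta)) * e t + 2 * eta\<^sup>2 * m / (t + eta)\<^sup>2"
  shows "e t \<le> 4 * eta\<^sup>2 * m / (t + eta)"
proof (induction t)
  case 0
  then show ?case
    using assms(1,4) by (simp add: power2_eq_square)
next
  case (Suc t)
  have "e (Suc t) \<le> 4 * (eta\<^sup>2 * m) / ((t + eta) + 1)"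
    using step[of t] Suc assms(1-3)
      sgd_recursion_step_le[of eta "t + eta" "eta\<^sup>2 * m" "e t"] by (simp add: mult.assoc)
  then show ?case
    by (simp add: add_ac mult.assoc)
qed

lemma gfun_ge:
  fixes f :: "nat \<Rightarrow> 'y::finite \<Rightarrow> 'a \<Rightarrow> real"
  shows "r w + f i y w \<le> gfun r f i w"
  unfolding gfun_def by (intro add_left_mono Max_ge) auto

lemma gfun_argmaxset:
  fixes f :: "nat \<Rightarrow> 'y::finite \<Rightarrow> 'a \<Rightarrow> real"
  assumes "y \<in> argmaxset f i w"
  shows "gfun r f i w = r w + f i y w"
proof -
  have "Max (range (\<lambda>y. f i y w)) = f i y w"
    using assms by (intro Max_eqI) (auto simp: argmaxset_def)
  then show ?thesis by (simp add: gfun_def)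
qed

lemma argmaxset_nonempty:
  fixes f :: "nat \<Rightarrow> 'y::finite \<Rightarrow> 'a \<Rightarrow> real"
  shows "argmaxset f i w \<noteq> {}"
proof -
  have "Max (range (\<lambda>y. f i y w)) \<in> range (\<lambda>y. f i y w)"
    by (rule Max_in) auto
  then obtain y where y: "Max (range (\<lambda>y. f i y w)) = f i y w"
    by (rule rangeE)
  have "f i y' w \<le> f i y w" for y'
    unfolding y[symmetric] by (rule Max_ge) auto
  then show ?thesis
    unfolding argmaxset_def by blast
qed

locale asubsgdp_setting =
  fixes W :: "'a::euclidean_space set" and n :: nat and f :: "nat \<Rightarrow> 'y::finite \<Rightarrow> 'a \<Rightarrow> real"
    and r :: "'a \<Rightarrow> real" and mu M :: real and eta :: nat and w_star winit :: 'a
    and est :: "nat \<Rightarrow> nat \<Rightarrow> 'a \<Rightarrow> 'y pmf" and sg :: "nat \<Rightarrow> nat \<Rightarrow> 'y \<Rightarrow> 'a \<Rightarrow> 'a"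
  assumes n_pos: "n \<ge> 1"
    and W_convex: "convex W" and W_closed: "closed W"
    and mu_pos: "mu > 0"
    and g_strongly_convex: "\<And>i. i \<in> {1..n} \<Longrightarrow> strongly_convex_on UNIV mu (gfun r f i)"
    and subgrad_bound: "\<And>i y w v. i \<in> {1..n} \<Longrightarrow> w \<in> W \<Longrightarrow>
                          v \<in> subdiff (\<lambda>u. r u + f i y u) w \<Longrightarrow> (norm v)\<^sup>2 \<le> M"
    and w_star: "w_star \<in> W" "\<And>w. w \<in> W \<Longrightarrow> Ffun n r f w_star \<le> Ffun n r f w"
    and eta_pos: "eta \<ge> 1"
    and winit: "winit \<in> W"
    and est_correct: "\<And>t i w. i \<in> {1..n} \<Longrightarrow>
          measure_pmf.prob (est t i w) (argmaxset f i w) \<ge> 1 - fail_prob eta t"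
    and sg_subgrad: "\<And>t i y w. i \<in> {1..n} \<Longrightarrow> sg t i y w \<in> subdiff (\<lambda>u. r u + f i y u) w"
begin

abbreviation sq_err :: "'a \<Rightarrow> real" where
  "sq_err w \<equiv> (norm (w - w_star))\<^sup>2"

abbreviation iterate :: "nat \<Rightarrow> 'a pmf" where
  "iterate \<equiv> asubsgdp W n est sg (step_size eta mu) winit"

definition update :: "nat \<Rightarrow> nat \<Rightarrow> 'y \<Rightarrow> 'a \<Rightarrow> 'a" where
  "update t i y w = closest_point W (w - step_size eta mu t *\<^sub>R sg t i y w)"

definition step :: "nat \<Rightarrow> 'a \<Rightarrow> 'a pmf" where
  "step t w = bind_pmf (pmf_of_set {1..n}) (\<lambda>i. map_pmf (\<lambda>y. update t i y w) (est t i w))"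

text \<open>Lower bound for \<open>\<langle>sg t i y w, w - w\<^sub>*\<rangle>\<close> when \<open>y\<close> is an exact maximiser.\<close>
definition descent :: "nat \<Rightarrow> 'a \<Rightarrow> real" where
  "descent i w = gfun r f i w - gfun r f i w_star + mu / 2 * sq_err w"

lemma iterate_Suc: "iterate (Suc t) = bind_pmf (iterate t) (step t)"
  by (simp add: step_def[abs_def] update_def map_pmf_def)

lemma set_pmf_step: "finite (set_pmf (step t w))" "set_pmf (step t w) \<subseteq> W"
proof -
  have "W \<noteq> {}"
    using winit by auto
  then show "finite (set_pmf (step t w))" "set_pmf (step t w) \<subseteq> W"
    using n_pos by (auto simp: step_def update_def closest_point_in_set[OF W_closed \<open>W \<noteq> {}\<close>])
qed

lemma finite_set_pmf_iterate: "finite (set_pmf (iterate t))"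
  by (induction t) (simp_all add: iterate_Suc set_pmf_step(1) del: asubsgdp.simps(2))

lemma set_pmf_iterate: "set_pmf (iterate t) \<subseteq> W"
  by (induction t) (use winit set_pmf_step(2) in \<open>auto simp: iterate_Suc simp del: asubsgdp.simps(2)\<close>)

lemma M_nonneg: "0 \<le> M"
proof -
  have one: "1 \<in> {1..n}"
    using n_pos by simp
  have "(norm (sg 0 1 undefined winit))\<^sup>2 \<le> M"
    by (rule subgrad_bound[OF one winit sg_subgrad[OF one]])
  then show ?thesis
    by (rule order_trans[OF zero_le_power2])
qed

lemma norm_sg_le:
  assumes "i \<in> {1..n}" "w \<in> W"
  shows "norm (sg t i y w) \<le> sqrt M"
  using subgrad_bound[OF assms sg_subgrad[OF assms(1)]] by (rule real_le_rsqrt)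

lemma abs_inner_sg_le:
  assumes "i \<in> {1..n}" "w \<in> W"
  shows "\<bar>inner (sg t i y w) (w - w_star)\<bar> \<le> sqrt M * norm (w - w_star)"
proof -
  have "\<bar>inner (sg t i y w) (w - w_star)\<bar> \<le> norm (sg t i y w) * norm (w - w_star)"
    by (rule Cauchy_Schwarz_ineq2)
  also have "\<dots> \<le> sqrt M * norm (w - w_star)"
    using norm_sg_le[OF assms] by (rule mult_right_mono) simp
  finally show ?thesis .
qed

lemma descent_le_inner_sg:
  assumes "i \<in> {1..n}" "y \<in> argmaxset f i w"
  shows "descent i w \<le> inner (sg t i y w) (w - w_star)"
proof -
  have "gfun r f i w + inner (sg t i y w) (w_star - w) + mu / 2 * (norm (w_star - w))\<^sup>2
      \<le> gfun r f i w_star"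
    by (rule strongly_convex_subgradient_ineq[OF g_strongly_convex[OF assms(1)] sg_subgrad[OF assms(1)]
          gfun_ge gfun_argmaxset[OF assms(2), symmetric]])
  then show ?thesis
    by (simp add: descent_def norm_minus_commute inner_diff_right)
qed

lemma descent_le:
  assumes "i \<in> {1..n}" "w \<in> W"
  shows "descent i w \<le> sqrt M * norm (w - w_star)"
proof -
  obtain y where "y \<in> argmaxset f i w"
    using argmaxset_nonempty[of f i w] by blast
  then have "descent i w \<le> inner (sg 0 i y w) (w - w_star)"
    by (rule descent_le_inner_sg[OF assms(1)])
  also have "\<dots> \<le> sqrt M * norm (w - w_star)"
    using abs_inner_sg_le[OF assms, where t = 0 and y = y] by simp
  finally show ?thesis .
qed

lemma average_descent_ge:
  assumes "w \<in> W"
  shows "mu * sq_err w \<le> (\<Sum>i\<in>{1..n}. descent i w) / n"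
proof -
  have "strongly_convex_on UNIV mu (\<lambda>w. (\<Sum>i\<in>{1..n}. gfun r f i w) / card {1..n})"
    using n_pos g_strongly_convex by (intro strongly_convex_on_average) auto
  then have "strongly_convex_on UNIV mu (Ffun n r f)"
    by (simp add: Ffun_def[abs_def])
  then have "strongly_convex_on W mu (Ffun n r f)"
    by (rule strongly_convex_on_subset) simp
  then have "mu / 2 * sq_err w \<le> Ffun n r f w - Ffun n r f w_star"
    using W_convex w_star assms by (intro strongly_convex_on_minimizer_gap)
  moreover have "(\<Sum>i\<in>{1..n}. descent i w) / n = Ffun n r f w - Ffun n r f w_star + mu / 2 * sq_err w"
    using n_pos by (simp add: descent_def Ffun_def sum.distrib sum_subtractf add_divide_distrib diff_divide_distrib)
  ultimately show ?thesis by simp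
qed

lemma sq_err_le:
  assumes "w \<in> W"
  shows "sq_err w \<le> M / mu\<^sup>2"
proof -
  define b where "b = norm (w - w_star)"
  have "mu * b\<^sup>2 \<le> (\<Sum>i\<in>{1..n}. descent i w) / n"
    using average_descent_ge[OF assms] by (simp add: b_def)
  also have "\<dots> \<le> (\<Sum>i\<in>{1..n}. sqrt M * b) / n"
    using descent_le assms by (intro divide_right_mono sum_mono) (auto simp: b_def)
  also have "\<dots> = sqrt M * b"
    using n_pos by simp
  finally have "b * (mu * b) \<le> b * sqrt M"
    by (simp add: power2_eq_square mult_ac)
  then have "mu * b \<le> sqrt M"
    using mu_pos M_nonneg by (cases "b = 0") (auto simp: b_def)
  then have "(mu * b)\<^sup>2 \<le> (sqrt M)\<^sup>2"
    using mu_pos by (intro power_mono) (auto simp: b_def)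
  then have "(mu * b)\<^sup>2 \<le> M"
    using M_nonneg by simp
  then show ?thesis
    using mu_pos by (simp add: b_def field_simps power_mult_distrib)
qed

lemma expected_inner_sg_ge:
  assumes "i \<in> {1..n}" "w \<in> W"
  shows "descent i w - 2 * fail_prob eta t * (sqrt M * norm (w - w_star))
           \<le> measure_pmf.expectation (est t i w) (\<lambda>y. inner (sg t i y w) (w - w_star))"
proof (rule expectation_ge_of_prob_ge)
  show "integrable (est t i w) (\<lambda>y. inner (sg t i y w) (w - w_star))"
    by (simp add: integrable_measure_pmf_finite)
  show "1 - fail_prob eta t \<le> measure_pmf.prob (est t i w) (argmaxset f i w)"
    using est_correct[OF assms(1)] .
  show "0 \<le> fail_prob eta t"
    by (simp add: fail_prob_def)
  show "descent i w \<le> inner (sg t i y w) (w - w_star)" if "y \<in> argmaxset f i w" for y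
    using descent_le_inner_sg[OF assms(1) that] .
  show "- (sqrt M * norm (w - w_star)) \<le> inner (sg t i y w) (w - w_star)" for y
    using abs_inner_sg_le[OF assms, where t = t and y = y] by (simp add: abs_le_iff)
  show "descent i w \<le> sqrt M * norm (w - w_star)"
    using descent_le[OF assms] .
  show "0 \<le> sqrt M * norm (w - w_star)"
    using M_nonneg by simp
qed

lemma expected_sq_err_update_le:
  fixes t :: nat
  assumes "i \<in> {1..n}" "w \<in> W"
  defines "\<gamma> \<equiv> step_size eta mu t"
  shows "measure_pmf.expectation (est t i w) (\<lambda>y. sq_err (update t i y w))
           \<le> sq_err w + \<gamma>\<^sup>2 * M - 2 * \<gamma> * (descent i w - 2 * fail_prob eta t * (sqrt M * norm (w - w_star)))"
proof -
  have \<gamma>: "0 \<le> \<gamma>" using mu_pos by (simp add: \<gamma>_def step_size_def)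
  have "measure_pmf.expectation (est t i w) (\<lambda>y. sq_err (update t i y w))
      \<le> measure_pmf.expectation (est t i w)
          (\<lambda>y. sq_err w + \<gamma>\<^sup>2 * M - 2 * \<gamma> * inner (sg t i y w) (w - w_star))"
  proof (intro integral_mono)
    fix y
    have "sq_err (update t i y w)
        \<le> sq_err w - 2 * \<gamma> * inner (sg t i y w) (w - w_star) + \<gamma>\<^sup>2 * (norm (sg t i y w))\<^sup>2"
      unfolding update_def \<gamma>_def using W_convex W_closed w_star(1)
      by (rule norm_closest_point_step_le)
    also have "\<dots> \<le> sq_err w - 2 * \<gamma> * inner (sg t i y w) (w - w_star) + \<gamma>\<^sup>2 * M"
      using subgrad_bound[OF assms(1,2) sg_subgrad[OF assms(1)]] by (simp add: mult_left_mono)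
    finally show "sq_err (update t i y w) \<le> sq_err w + \<gamma>\<^sup>2 * M - 2 * \<gamma> * inner (sg t i y w) (w - w_star)"
      by simp
  qed (auto simp: integrable_measure_pmf_finite)
  also have "\<dots> = sq_err w + \<gamma>\<^sup>2 * M
      - 2 * \<gamma> * measure_pmf.expectation (est t i w) (\<lambda>y. inner (sg t i y w) (w - w_star))"
    by (simp add: integrable_measure_pmf_finite)
  also have "\<dots> \<le> sq_err w + \<gamma>\<^sup>2 * M - 2 * \<gamma> * (descent i w - 2 * fail_prob eta t * (sqrt M * norm (w - w_star)))"
    using expected_inner_sg_ge[OF assms(1,2)] \<gamma> by (simp add: mult_left_mono)
  finally show ?thesis .
qed

lemma expected_sq_err_step_le:
  assumes "w \<in> W"
  shows "measure_pmf.expectation (step t w) sq_err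
           \<le> (1 - (2 * real eta - 1/4) / (real t + real eta)) * sq_err w
             + 2 * (real eta)\<^sup>2 * (M / mu\<^sup>2) / (real t + real eta)\<^sup>2"
proof -
  define \<gamma> where "\<gamma> = step_size eta mu t"
  define p where "p = fail_prob eta t"
  define B where "B = sqrt M * norm (w - w_star)"
  have \<gamma>: "0 \<le> \<gamma>" using mu_pos by (simp add: \<gamma>_def step_size_def)
  have "measure_pmf.expectation (step t w) sq_err
      = (\<Sum>i\<in>{1..n}. measure_pmf.expectation (est t i w) (\<lambda>y. sq_err (update t i y w))) / n"
    using n_pos unfolding step_def
    by (subst pmf_expectation_bind_pmf_of_set) (auto simp: divide_inverse_commute sum_distrib_left)
  also have "\<dots> \<le> (\<Sum>i\<in>{1..n}. sq_err w + \<gamma>\<^sup>2 * M + 4 * \<gamma> * p * B - 2 * \<gamma> * descent i w) / n"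
    using expected_sq_err_update_le[OF _ assms, where t = t] unfolding \<gamma>_def p_def B_def
    by (intro divide_right_mono sum_mono) (auto simp: algebra_simps)
  also have "\<dots> = sq_err w + \<gamma>\<^sup>2 * M + 4 * \<gamma> * p * B - 2 * \<gamma> * ((\<Sum>i\<in>{1..n}. descent i w) / n)"
    using n_pos by (simp add: sum_subtractf sum_distrib_left field_simps)
  also have "\<dots> \<le> sq_err w + \<gamma>\<^sup>2 * M + 4 * \<gamma> * p * B - 2 * \<gamma> * (mu * sq_err w)"
    using average_descent_ge[OF assms] \<gamma> by (intro diff_left_mono mult_left_mono) auto
  also have "\<dots> = (1 - 2 * \<gamma> * mu) * sq_err w + \<gamma>\<^sup>2 * M + 4 * \<gamma> * p * B"
    by (simp add: algebra_simps)
  also have "\<dots> \<le> (1 - (2 * real eta - 1/4) / (real t + real eta)) * sq_err w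
             + 2 * (real eta)\<^sup>2 * (M / mu\<^sup>2) / (real t + real eta)\<^sup>2"
    unfolding \<gamma>_def p_def B_def step_size_def fail_prob_def
    using eta_pos mu_pos M_nonneg by (intro sgd_step_coefficient_le) auto
  finally show ?thesis .
qed

lemma expected_sq_err_iterate_le:
  "measure_pmf.expectation (iterate t) sq_err \<le> 4 * (real eta)\<^sup>2 * (M / mu\<^sup>2) / (real t + real eta)"
proof (rule sgd_recursion_bound)
  show "1 \<le> real eta" "0 \<le> M / mu\<^sup>2"
    using eta_pos M_nonneg by auto
  show "0 \<le> measure_pmf.expectation (iterate t) sq_err" for t
    by (intro integral_nonneg_AE) auto
  have "sq_err winit \<le> 1 * (M / mu\<^sup>2)"
    using sq_err_le[OF winit] by simp
  also have "\<dots> \<le> 4 * real eta * (M / mu\<^sup>2)"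
    using eta_pos M_nonneg by (intro mult_right_mono) auto
  finally show "measure_pmf.expectation (iterate 0) sq_err \<le> 4 * real eta * (M / mu\<^sup>2)"
    by simp
  show "measure_pmf.expectation (iterate (Suc t)) sq_err
      \<le> (1 - (2 * real eta - 1/4) / (real t + real eta)) * measure_pmf.expectation (iterate t) sq_err
        + 2 * (real eta)\<^sup>2 * (M / mu\<^sup>2) / (real t + real eta)\<^sup>2" for t
    unfolding iterate_Suc
  proof (rule expectation_bind_pmf_le_affine[OF finite_set_pmf_iterate set_pmf_step(1)])
    show "measure_pmf.expectation (step t w) sq_err
        \<le> (1 - (2 * real eta - 1/4) / (real t + real eta)) * sq_err w
          + 2 * (real eta)\<^sup>2 * (M / mu\<^sup>2) / (real t + real eta)\<^sup>2"
      if "w \<in> set_pmf (iterate t)" for w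
      using that set_pmf_iterate by (intro expected_sq_err_step_le) auto
  qed
qed

end

theorem mainTheorem13:
  fixes W :: "(real ^ 'd) set"
    and n :: nat
    and f :: "nat \<Rightarrow> 'y::finite \<Rightarrow> real ^ 'd \<Rightarrow> real"
    and r :: "real ^ 'd \<Rightarrow> real"
    and mu M :: real
    and eta :: nat
    and w_star winit :: "real ^ 'd"
    and est :: "nat \<Rightarrow> nat \<Rightarrow> real ^ 'd \<Rightarrow> 'y pmf"
    and sg :: "nat \<Rightarrow> nat \<Rightarrow> 'y \<Rightarrow> real ^ 'd \<Rightarrow> real ^ 'd"
  assumes n_pos: "n \<ge> 1"
    and W_convex: "convex W" and W_closed: "closed W"
    and f_convex: "\<And>i y. i \<in> {1..n} \<Longrightarrow> convex_on UNIV (f i y)"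
    and r_strongly_convex: "\<exists>c>0. strongly_convex_on UNIV c r"
    and mu_pos: "mu > 0"
    and g_strongly_convex: "\<And>i. i \<in> {1..n} \<Longrightarrow> strongly_convex_on UNIV mu (gfun r f i)"
    and subgrad_exist: "\<And>i y w. i \<in> {1..n} \<Longrightarrow> subdiff (\<lambda>u. r u + f i y u) w \<noteq> {}"
    and subgrad_bound: "\<And>i y w v. i \<in> {1..n} \<Longrightarrow> w \<in> W \<Longrightarrow>
                          v \<in> subdiff (\<lambda>u. r u + f i y u) w \<Longrightarrow> (norm v)\<^sup>2 \<le> M"
    and zero_point: "\<exists>w0\<in>W. \<forall>i\<in>{1..n}. gfun r f i w0 = 0"
    and w_star: "w_star \<in> W" "\<And>w. w \<in> W \<Longrightarrow> Ffun n r f w_star \<le> Ffun n r f w"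
    and eta_pos: "eta \<ge> 1"
    and winit: "winit \<in> W"
    and est_correct: "\<And>t i w. i \<in> {1..n} \<Longrightarrow>
          measure_pmf.prob (est t i w) (argmaxset f i w) \<ge> 1 - fail_prob eta t"
    and sg_subgrad: "\<And>t i y w. i \<in> {1..n} \<Longrightarrow> sg t i y w \<in> subdiff (\<lambda>u. r u + f i y u) w"
  shows "\<forall>t. measure_pmf.expectation
              (asubsgdp W n est sg (step_size eta mu) winit t)
              (\<lambda>w. (norm (w - w_star))\<^sup>2)
           \<le> 4 * (real eta)\<^sup>2 * M / (mu\<^sup>2 * (real t + real eta))"
proof -
  interpret asubsgdp_setting W n f r mu M eta w_star winit est sg
    using n_pos W_convex W_closed mu_pos g_strongly_convex subgrad_bound w_star eta_pos winit
      est_correct sg_subgrad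
    by unfold_locales auto
  show ?thesis
    using expected_sq_err_iterate_le by simp
qed

end
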